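(* Let $A$ be an $n\times n$ matrix with a designated set of large positions, and let $(X,Y)$ be a $q$-good restriction having a $p$-strong line, where $0\le p<1$. Let $m=|X|$ and $\varrho=2q/(1-p)$. If $m\ge6$, $(1-p)m>1$, $2\varrho m>1$ and $\varrho\le1/2$, then that line is in fact $(q+3\varrho)$-strong for $(X,Y)$.
   Context: Let $A=(a_{ij})_{i,j\in[n]}$ with a designated set $L\subseteq[n]\times[n]$ of large positions. A restriction is $(X,Y)$ with $X,Y\subseteq[n]$, $|X|=|Y|$; a generalized diagonal of $A[X,Y]$ is $\{(i,\sigma(i)):i\in X\}$ for a bijection $\sigma:X\to Y$, random meaning uniform $\sigma$; it is good if it contains exactly one large position; $(X,Y)$ is $q$-good if a random generalized diagonal is good with probability $\ge1-q$. For $i\in X$, row $i$ is $p$-strong for $(X,Y)$ if at least $(1-p)|Y|$ of the positions $\{(i,j):j\in Y\}$ are large; column $j\in Y$ is $p$-strong if at least $(1-p)|X|$ of $\{(i,j):i\in X\}$ are large. A $p$-strong line is a $p$-strong row or column. *)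

theory Defs
  imports Complex_Main
begin

text \<open>Matrix positions are pairs (i,j) of indices in [n] = {0..<n}; only the set L of
  large positions matters for the notions below, so the matrix entries are not modelled.\<close>

definition restriction :: "nat \<Rightarrow> nat set \<Rightarrow> nat set \<Rightarrow> bool" where
  "restriction n X Y \<longleftrightarrow> X \<subseteq> {..<n} \<and> Y \<subseteq> {..<n} \<and> card X = card Y"

text \<open>Distinct bijections give distinct diagonals, so the uniform distribution on bijections
  corresponds to the uniform distribution on this set.\<close>
definition gen_diagonals :: "nat set \<Rightarrow> nat set \<Rightarrow> (nat \<times> nat) set set" where
  "gen_diagonals X Y = {D. \<exists>\<sigma>. bij_betw \<sigma> X Y \<and> D = (\<lambda>i. (i, \<sigma> i)) ` X}"

definition good_diagonal :: "(nat \<times> nat) set \<Rightarrow> (nat \<times> nat) set \<Rightarrow> bool" where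
  "good_diagonal L D \<longleftrightarrow> card (D \<inter> L) = 1"

definition q_good :: "(nat \<times> nat) set \<Rightarrow> real \<Rightarrow> nat set \<Rightarrow> nat set \<Rightarrow> bool" where
  "q_good L q X Y \<longleftrightarrow>
     real (card {D \<in> gen_diagonals X Y. good_diagonal L D}) \<ge> (1 - q) * real (card (gen_diagonals X Y))"

datatype line = Row nat | Col nat

definition strong_line :: "(nat \<times> nat) set \<Rightarrow> real \<Rightarrow> nat set \<Rightarrow> nat set \<Rightarrow> line \<Rightarrow> bool" where
  "strong_line L p X Y l \<longleftrightarrow> (case l of
      Row i \<Rightarrow> i \<in> X \<and> real (card {j \<in> Y. (i, j) \<in> L}) \<ge> (1 - p) * real (card Y)
    | Col j \<Rightarrow> j \<in> Y \<and> real (card {i \<in> X. (i, j) \<in> L}) \<ge> (1 - p) * real (card X))"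

end

theory Submission
  imports Defs "HOL-Library.FuncSet" "HOL-Combinatorics.Transposition"
begin

text \<open>
  Let the line be row \<open>i\<close> (columns follow by transposing), let \<open>S \<subseteq> Y\<close> be its large
  positions, \<open>k = |S|\<close>, \<open>m = |Y|\<close>, and let \<open>U\<close>, \<open>V\<close> be the bijections \<open>\<sigma> : X \<rightarrow> Y\<close> with
  \<open>\<sigma> i \<notin> S\<close> resp. \<open>\<sigma> i \<in> S\<close>. Composing with the transposition \<open>(i r)\<close> matches the pairs
  \<open>(\<sigma>, r)\<close> with \<open>\<sigma> \<in> U\<close>, \<open>\<sigma> r \<in> S\<close> bijectively with the pairs with \<open>\<sigma> \<in> V\<close>, \<open>\<sigma> r \<notin> S\<close>, so
  \<open>k |U| = (m - k) |V|\<close>. For a good \<open>\<sigma> \<in> U\<close> all but at most one of these \<open>k\<close> switches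
  create a second large position, so \<open>(k - 1) |good \<inter> U| \<le> (m - k) |bad \<inter> V|\<close>.
\<close>

text \<open>Extensionality makes \<open>bijections X Y\<close> finite and in bijection with \<open>gen_diagonals X Y\<close>.\<close>
definition bijections :: "'a set \<Rightarrow> 'b set \<Rightarrow> ('a \<Rightarrow> 'b) set" where
  "bijections X Y = {\<sigma> \<in> extensional X. bij_betw \<sigma> X Y}"

definition large_count :: "('a \<times> 'b) set \<Rightarrow> 'a set \<Rightarrow> ('a \<Rightarrow> 'b) \<Rightarrow> nat" where
  "large_count L X \<sigma> = card {x \<in> X. (x, \<sigma> x) \<in> L}"

lemma finite_bijections: "finite X \<Longrightarrow> finite Y \<Longrightarrow> finite (bijections X Y)"
proof (rule finite_subset)
  show "bijections X Y \<subseteq> X \<rightarrow>\<^sub>E Y"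
    unfolding bijections_def by (auto simp: PiE_iff extensional_def dest: bij_betwE)
qed (rule finite_PiE)

lemma bijections_nonempty:
  assumes "finite X" "finite Y" "card X = card Y"
  shows "bijections X Y \<noteq> {}"
proof -
  obtain h where "bij_betw h X Y" using assms finite_same_card_bij by blast
  then have "restrict h X \<in> bijections X Y" unfolding bijections_def by simp
  then show ?thesis by blast
qed

lemma card_preimage_bij_betw:
  assumes "bij_betw \<sigma> X Y" "S \<subseteq> Y"
  shows "card {x \<in> X. \<sigma> x \<in> S} = card S"
proof -
  have "\<sigma> ` {x \<in> X. \<sigma> x \<in> S} = S" using assms unfolding bij_betw_def by auto
  then have "bij_betw \<sigma> {x \<in> X. \<sigma> x \<in> S} S"
    by (rule bij_betw_subset[OF assms(1), rotated]) blast
  then show ?thesis by (rule bij_betw_same_card)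
qed

lemma comp_transpose_in_bijections:
  assumes "\<sigma> \<in> bijections X Y" "a \<in> X" "b \<in> X"
  shows "\<sigma> \<circ> transpose a b \<in> bijections X Y"
proof -
  have "transpose a b x = x" if "x \<notin> X" for x
    using that assms(2,3) by (auto intro: transpose_apply_other)
  then show ?thesis
    using assms unfolding bijections_def extensional_def by (simp add: bij_betw_swap_iff)
qed

lemma inj_on_graph_extensional: "inj_on (\<lambda>\<sigma>. (\<lambda>x. (x, \<sigma> x)) ` X) (extensional X)"
proof (rule inj_onI)
  fix \<sigma> \<tau> assume ext: "\<sigma> \<in> extensional X" "\<tau> \<in> extensional X"
    and graph: "(\<lambda>x. (x, \<sigma> x)) ` X = (\<lambda>x. (x, \<tau> x)) ` X"
  have "\<sigma> x = \<tau> x" if "x \<in> X" for x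
  proof -
    have "(x, \<sigma> x) \<in> (\<lambda>x. (x, \<tau> x)) ` X" using that graph[symmetric] by blast
    then show ?thesis by auto
  qed
  with ext show "\<sigma> = \<tau>" by (rule extensionalityI)
qed

lemma gen_diagonals_eq_graphs:
  "gen_diagonals X Y = (\<lambda>\<sigma>. (\<lambda>x. (x, \<sigma> x)) ` X) ` bijections X Y"
proof
  show "gen_diagonals X Y \<subseteq> (\<lambda>\<sigma>. (\<lambda>x. (x, \<sigma> x)) ` X) ` bijections X Y"
  proof
    fix D assume "D \<in> gen_diagonals X Y"
    then obtain \<sigma> where "bij_betw \<sigma> X Y" "D = (\<lambda>x. (x, \<sigma> x)) ` X"
      unfolding gen_diagonals_def by blast
    then have "restrict \<sigma> X \<in> bijections X Y" "D = (\<lambda>x. (x, restrict \<sigma> X x)) ` X"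
      unfolding bijections_def by auto
    then show "D \<in> (\<lambda>\<sigma>. (\<lambda>x. (x, \<sigma> x)) ` X) ` bijections X Y" by blast
  qed
  show "(\<lambda>\<sigma>. (\<lambda>x. (x, \<sigma> x)) ` X) ` bijections X Y \<subseteq> gen_diagonals X Y"
    unfolding gen_diagonals_def bijections_def by blast
qed

lemma good_diagonal_graph_iff:
  "good_diagonal L ((\<lambda>x. (x, \<sigma> x)) ` X) \<longleftrightarrow> large_count L X \<sigma> = 1"
proof -
  have "(\<lambda>x. (x, \<sigma> x)) ` X \<inter> L = (\<lambda>x. (x, \<sigma> x)) ` {x \<in> X. (x, \<sigma> x) \<in> L}"
    by auto
  moreover have "inj_on (\<lambda>x. (x, \<sigma> x)) A" for A by (rule inj_onI) simp
  ultimately show ?thesis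
    unfolding good_diagonal_def large_count_def by (simp add: card_image)
qed

lemma q_good_iff_bijections:
  "q_good L q X Y \<longleftrightarrow>
     (1 - q) * real (card (bijections X Y)) \<le> real (card {\<sigma> \<in> bijections X Y. large_count L X \<sigma> = 1})"
proof -
  let ?graph = "\<lambda>\<sigma>. (\<lambda>x. (x, \<sigma> x)) ` X"
  have inj: "inj_on ?graph B" if "B \<subseteq> bijections X Y" for B
    by (rule inj_on_subset[OF inj_on_graph_extensional]) (use that in \<open>auto simp: bijections_def\<close>)
  have "{D \<in> gen_diagonals X Y. good_diagonal L D} = ?graph ` {\<sigma> \<in> bijections X Y. large_count L X \<sigma> = 1}"
    unfolding gen_diagonals_eq_graphs by (auto simp: good_diagonal_graph_iff)
  then show ?thesis
    unfolding q_good_def gen_diagonals_eq_graphs by (simp add: card_image inj)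
qed

lemma card_bad_bijections_le:
  assumes "q_good L q X Y" "finite X" "finite Y"
  shows "real (card {\<sigma> \<in> bijections X Y. large_count L X \<sigma> \<noteq> 1}) \<le> q * real (card (bijections X Y))"
proof -
  have "card {\<sigma> \<in> bijections X Y. large_count L X \<sigma> = 1} + card {\<sigma> \<in> bijections X Y. large_count L X \<sigma> \<noteq> 1}
          = card (bijections X Y)"
    using finite_bijections[OF assms(2,3)] by (subst card_Un_disjoint[symmetric]) (auto intro: arg_cong[where f = card])
  then show ?thesis using assms(1) unfolding q_good_iff_bijections by (simp add: algebra_simps flip: of_nat_add)
qed

lemma swap_gen_diagonal:
  assumes "D \<in> gen_diagonals X Y"
  shows "prod.swap ` D \<in> gen_diagonals Y X"
proof -
  obtain \<sigma> where \<sigma>: "bij_betw \<sigma> X Y" and D: "D = (\<lambda>x. (x, \<sigma> x)) ` X"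
    using assms unfolding gen_diagonals_def by blast
  let ?\<tau> = "inv_into X \<sigma>"
  have "(\<lambda>y. (y, ?\<tau> y)) ` Y = (\<lambda>x. (\<sigma> x, ?\<tau> (\<sigma> x))) ` X"
    using bij_betw_imp_surj_on[OF \<sigma>] image_image[of "\<lambda>y. (y, ?\<tau> y)" \<sigma> X] by simp
  also have "\<dots> = prod.swap ` D"
    unfolding D image_image using bij_betw_imp_inj_on[OF \<sigma>] by (auto intro!: image_cong)
  finally show ?thesis
    using bij_betw_inv_into[OF \<sigma>] unfolding gen_diagonals_def by blast
qed

lemma q_good_transpose:
  assumes "q_good L q X Y"
  shows "q_good (prod.swap ` L) q Y X"
proof -
  let ?swap = "image (prod.swap :: nat \<times> nat \<Rightarrow> nat \<times> nat)"
  have involution: "?swap (?swap A) = A" for A by (simp add: image_image)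
  then have inj: "inj_on ?swap \<D>" for \<D> by (rule inj_on_inverseI)
  have diagonals: "gen_diagonals Y X = ?swap ` gen_diagonals X Y"
  proof
    show "gen_diagonals Y X \<subseteq> ?swap ` gen_diagonals X Y"
    proof
      fix E assume "E \<in> gen_diagonals Y X"
      then have "?swap E \<in> gen_diagonals X Y" by (rule swap_gen_diagonal)
      then show "E \<in> ?swap ` gen_diagonals X Y" using involution[of E, symmetric] by (rule rev_image_eqI)
    qed
  qed (use swap_gen_diagonal in blast)
  have "good_diagonal (?swap L) (?swap D) \<longleftrightarrow> good_diagonal L D" for D
    unfolding good_diagonal_def image_Int[OF inj_swap, symmetric] by (simp add: card_image)
  then have "{D \<in> gen_diagonals Y X. good_diagonal (?swap L) D}
      = ?swap ` {D \<in> gen_diagonals X Y. good_diagonal L D}"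
    unfolding diagonals by auto
  then show ?thesis
    using assms unfolding q_good_def diagonals by (simp add: card_image inj)
qed

lemma strong_Col_iff_strong_Row_transpose:
  "strong_line L p X Y (Col j) \<longleftrightarrow> strong_line (prod.swap ` L) p Y X (Row j)"
proof -
  have "(j, i) \<in> prod.swap ` L \<longleftrightarrow> (i, j) \<in> L" for i by force
  then show ?thesis unfolding strong_line_def by simp
qed

lemma strong_line_mono:
  assumes "p \<le> p'" "strong_line L p X Y l"
  shows "strong_line L p' X Y l"
  using assms by (cases l) (auto simp: strong_line_def elim!: order.trans[rotated] intro!: mult_right_mono)

definition switch :: "'a \<Rightarrow> ('a \<Rightarrow> 'b) \<times> 'a \<Rightarrow> ('a \<Rightarrow> 'b) \<times> 'a" where
  "switch i = (\<lambda>(\<sigma>, r). (\<sigma> \<circ> transpose i r, r))"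

lemma switch_switch [simp]: "switch i (switch i w) = w"
  by (cases w) (simp add: switch_def comp_assoc)

lemma card_Sigma_preimages:
  assumes "B \<subseteq> bijections X Y" "finite B" "finite X" "S \<subseteq> Y"
  shows "card (SIGMA \<sigma>:B. {r \<in> X. \<sigma> r \<in> S}) = card S * card B"
proof -
  have "card {r \<in> X. \<sigma> r \<in> S} = card S" if "\<sigma> \<in> B" for \<sigma>
    using that assms(1,4) by (intro card_preimage_bij_betw) (auto simp: bijections_def)
  then show ?thesis using assms(2,3) by simp
qed

lemma switch_in_Sigma:
  assumes "i \<in> X" "A \<inter> A' = {}"
    and "w \<in> (SIGMA \<sigma>:{\<sigma> \<in> bijections X Y. \<sigma> i \<in> A}. {r \<in> X. \<sigma> r \<in> A'})"
  shows "switch i w \<in> (SIGMA \<sigma>:{\<sigma> \<in> bijections X Y. \<sigma> i \<in> A'}. {r \<in> X. \<sigma> r \<in> A})"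
  using assms by (auto simp: switch_def comp_transpose_in_bijections)

lemma bij_betw_switch:
  assumes "i \<in> X" "A \<inter> A' = {}"
  shows "bij_betw (switch i)
           (SIGMA \<sigma>:{\<sigma> \<in> bijections X Y. \<sigma> i \<in> A}. {r \<in> X. \<sigma> r \<in> A'})
           (SIGMA \<sigma>:{\<sigma> \<in> bijections X Y. \<sigma> i \<in> A'}. {r \<in> X. \<sigma> r \<in> A})"
proof (rule bij_betw_byWitness[where f' = "switch i"])
  have "A' \<inter> A = {}" using assms(2) by blast
  then show "switch i ` (SIGMA \<sigma>:{\<sigma> \<in> bijections X Y. \<sigma> i \<in> A'}. {r \<in> X. \<sigma> r \<in> A})
      \<subseteq> (SIGMA \<sigma>:{\<sigma> \<in> bijections X Y. \<sigma> i \<in> A}. {r \<in> X. \<sigma> r \<in> A'})"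
    by (intro image_subsetI switch_in_Sigma[OF assms(1)])
  show "switch i ` (SIGMA \<sigma>:{\<sigma> \<in> bijections X Y. \<sigma> i \<in> A}. {r \<in> X. \<sigma> r \<in> A'})
      \<subseteq> (SIGMA \<sigma>:{\<sigma> \<in> bijections X Y. \<sigma> i \<in> A'}. {r \<in> X. \<sigma> r \<in> A})"
    by (intro image_subsetI switch_in_Sigma[OF assms])
qed simp_all

lemma switching_double_count:
  assumes "finite X" "finite Y" "i \<in> X" "S \<subseteq> Y"
  shows "card S * card {\<sigma> \<in> bijections X Y. \<sigma> i \<in> Y - S}
       = card (Y - S) * card {\<sigma> \<in> bijections X Y. \<sigma> i \<in> S}"
proof -
  let ?U = "{\<sigma> \<in> bijections X Y. \<sigma> i \<in> Y - S}" and ?V = "{\<sigma> \<in> bijections X Y. \<sigma> i \<in> S}"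
  have finite: "finite ?U" "finite ?V" using finite_bijections[OF assms(1,2)] by simp_all
  have "card S * card ?U = card (SIGMA \<sigma>:?U. {r \<in> X. \<sigma> r \<in> S})"
    by (rule card_Sigma_preimages[symmetric]) (use finite assms in auto)
  also have "\<dots> = card (SIGMA \<sigma>:?V. {r \<in> X. \<sigma> r \<in> Y - S})"
    by (rule bij_betw_same_card, rule bij_betw_switch[OF assms(3)]) blast
  also have "\<dots> = card (Y - S) * card ?V"
    by (rule card_Sigma_preimages) (use finite assms in auto)
  finally show ?thesis .
qed

lemma large_count_comp_transpose_neq_1:
  assumes "finite X" "i \<in> X" "r \<in> X" "large_count L X \<sigma> = 1"
    and "(i, \<sigma> i) \<notin> L" "(r, \<sigma> r) \<notin> L" "(i, \<sigma> r) \<in> L"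
  shows "large_count L X (\<sigma> \<circ> transpose i r) \<noteq> 1"
proof -
  obtain z where z: "{x \<in> X. (x, \<sigma> x) \<in> L} = {z}"
    using assms(4) unfolding large_count_def by (rule card_1_singletonE)
  then have "z \<noteq> i" "z \<noteq> r" "(z, \<sigma> z) \<in> L" "z \<in> X" using assms(5,6) by auto
  then have "{i, z} \<subseteq> {x \<in> X. (x, (\<sigma> \<circ> transpose i r) x) \<in> L}"
    using assms(2,7) by auto
  from card_mono[OF _ this] have "2 \<le> large_count L X (\<sigma> \<circ> transpose i r)"
    using assms(1) \<open>z \<noteq> i\<close> unfolding large_count_def by simp
  then show ?thesis by simp
qed

lemma switch_good_to_bad:
  fixes L :: "('a \<times> 'b) set" and i :: 'a and Y :: "'b set"
  defines "S \<equiv> {j \<in> Y. (i, j) \<in> L}"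
  assumes "finite X" "i \<in> X" "r \<in> X" "\<sigma> \<in> bijections X Y" "\<sigma> i \<in> Y - S"
    and "large_count L X \<sigma> = 1" "\<sigma> r \<in> S" "(r, \<sigma> r) \<notin> L"
  shows "switch i (\<sigma>, r)
           \<in> (SIGMA \<sigma>:{\<sigma> \<in> bijections X Y. \<sigma> i \<in> S \<and> large_count L X \<sigma> \<noteq> 1}. {r \<in> X. \<sigma> r \<in> Y - S})"
proof -
  have "(Y - S) \<inter> S = {}" by blast
  with assms(4-9) have "switch i (\<sigma>, r) \<in> (SIGMA \<sigma>:{\<sigma> \<in> bijections X Y. \<sigma> i \<in> S}. {r \<in> X. \<sigma> r \<in> Y - S})"
    by (intro switch_in_Sigma[OF assms(3)]) auto
  moreover have "large_count L X (\<sigma> \<circ> transpose i r) \<noteq> 1"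
    using assms(2-9) by (intro large_count_comp_transpose_neq_1) (auto simp: S_def)
  ultimately show ?thesis unfolding switch_def by simp
qed

lemma good_switching_bound:
  fixes L :: "('a \<times> 'b) set"
  assumes "finite X" "finite Y" "i \<in> X"
  defines "S \<equiv> {j \<in> Y. (i, j) \<in> L}"
  shows "(card S - 1) * card {\<sigma> \<in> bijections X Y. \<sigma> i \<in> Y - S \<and> large_count L X \<sigma> = 1}
       \<le> card (Y - S) * card {\<sigma> \<in> bijections X Y. \<sigma> i \<in> S \<and> large_count L X \<sigma> \<noteq> 1}"
proof -
  let ?G = "{\<sigma> \<in> bijections X Y. \<sigma> i \<in> Y - S \<and> large_count L X \<sigma> = 1}"
  let ?B = "{\<sigma> \<in> bijections X Y. \<sigma> i \<in> S \<and> large_count L X \<sigma> \<noteq> 1}"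
  let ?W = "SIGMA \<sigma>:?G. {r \<in> X. \<sigma> r \<in> S} - {x \<in> X. (x, \<sigma> x) \<in> L}"
  have finite: "finite ?G" "finite ?B" using finite_bijections[OF assms(1,2)] by simp_all
  have "card S - 1 \<le> card ({r \<in> X. \<sigma> r \<in> S} - {x \<in> X. (x, \<sigma> x) \<in> L})" if "\<sigma> \<in> ?G" for \<sigma>
  proof -
    have "card {r \<in> X. \<sigma> r \<in> S} = card S"
      using that by (intro card_preimage_bij_betw) (auto simp: bijections_def S_def)
    then show ?thesis
      using diff_card_le_card_Diff[of "{x \<in> X. (x, \<sigma> x) \<in> L}" "{r \<in> X. \<sigma> r \<in> S}"] that assms(1)
      by (simp add: large_count_def)
  qed
  then have "(card S - 1) * card ?G \<le> (\<Sum>\<sigma>\<in>?G. card ({r \<in> X. \<sigma> r \<in> S} - {x \<in> X. (x, \<sigma> x) \<in> L}))"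
    using sum_bounded_below[of ?G "card S - 1"] by (simp add: mult.commute)
  also have "\<dots> = card ?W"
    using finite assms(1) by simp
  also have "\<dots> = card (switch i ` ?W)"
    by (rule card_image[symmetric], rule inj_on_inverseI[where g = "switch i"]) simp
  also have "\<dots> \<le> card (SIGMA \<sigma>:?B. {r \<in> X. \<sigma> r \<in> Y - S})"
  proof (rule card_mono)
    show "finite (SIGMA \<sigma>:?B. {r \<in> X. \<sigma> r \<in> Y - S})" using finite assms(1) by auto
    show "switch i ` ?W \<subseteq> (SIGMA \<sigma>:?B. {r \<in> X. \<sigma> r \<in> Y - S})"
    proof (rule image_subsetI)
      fix w assume "w \<in> ?W"
      then obtain \<sigma> r where w: "w = (\<sigma>, r)" and "\<sigma> \<in> ?G"
        and "r \<in> X" "\<sigma> r \<in> S" "(r, \<sigma> r) \<notin> L"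
        by blast
      then show "switch i w \<in> (SIGMA \<sigma>:?B. {r \<in> X. \<sigma> r \<in> Y - S})"
        unfolding w S_def by (intro switch_good_to_bad[OF assms(1,3)]) (auto simp: S_def)
    qed
  qed
  also have "\<dots> = card (Y - S) * card ?B"
    by (rule card_Sigma_preimages) (use finite assms in auto)
  finally show ?thesis .
qed

lemma switching_counts_bound:
  fixes k m N u v g b b' :: nat
  assumes "N = u + v" "u = g + b" "k * u = (m - k) * v" "(k - 1) * g \<le> (m - k) * b'"
    and "1 \<le> k" "k \<le> m"
  shows "(k - 1) * (m - k) * N \<le> m * (m - 1) * (b + b')"
proof -
  have "(k - 1) * (m - k) * N = (k - 1) * ((m - k) * u + k * u)"
    by (simp only: assms(1) assms(3)[symmetric] mult.assoc add_mult_distrib2)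
  also have "\<dots> = (k - 1) * (m * u)"
    using assms(6) by (simp flip: add_mult_distrib)
  also have "\<dots> = m * ((k - 1) * g + (k - 1) * b)"
    by (simp only: assms(2) mult.left_commute add_mult_distrib2)
  also have "\<dots> \<le> m * ((m - 1) * b' + (m - 1) * b)"
  proof (intro mult_le_mono2 add_mono)
    have "(m - k) * b' \<le> (m - 1) * b'"
      using assms(5) by (intro mult_le_mono1) simp
    with assms(4) show "(k - 1) * g \<le> (m - 1) * b'" by (rule le_trans)
    show "(k - 1) * b \<le> (m - 1) * b"
      using assms(6) by (intro mult_le_mono1) simp
  qed
  also have "\<dots> = m * (m - 1) * (b + b')"
    by (simp add: algebra_simps)
  finally show ?thesis .
qed

lemma card_bad_bijections_lower_bound:
  fixes L :: "('a \<times> 'b) set"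
  assumes "finite X" "finite Y" "i \<in> X"
  defines "k \<equiv> card {j \<in> Y. (i, j) \<in> L}"
  shows "(k - 1) * (card Y - k) * card (bijections X Y)
       \<le> card Y * (card Y - 1) * card {\<sigma> \<in> bijections X Y. large_count L X \<sigma> \<noteq> 1}"
proof (cases "k = 0")
  case False
  define S where "S = {j \<in> Y. (i, j) \<in> L}"
  define m where "m = card Y"
  let ?B = "bijections X Y"
  let ?U = "{\<sigma> \<in> ?B. \<sigma> i \<in> Y - S}" and ?V = "{\<sigma> \<in> ?B. \<sigma> i \<in> S}"
  let ?GU = "{\<sigma> \<in> ?B. \<sigma> i \<in> Y - S \<and> large_count L X \<sigma> = 1}"
  let ?BU = "{\<sigma> \<in> ?B. \<sigma> i \<in> Y - S \<and> large_count L X \<sigma> \<noteq> 1}"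
  let ?BV = "{\<sigma> \<in> ?B. \<sigma> i \<in> S \<and> large_count L X \<sigma> \<noteq> 1}"
  let ?bad = "{\<sigma> \<in> ?B. large_count L X \<sigma> \<noteq> 1}"
  have finite: "finite ?B" using finite_bijections[OF assms(1,2)] .
  have "S \<subseteq> Y" unfolding S_def by blast
  then have k_le: "k \<le> m" and card_Y_S: "card (Y - S) = m - k"
    using assms(2) by (simp_all add: k_def S_def m_def card_mono card_Diff_subset finite_subset)
  have in_Y: "\<sigma> i \<in> Y" if "\<sigma> \<in> ?B" for \<sigma>
    using that assms(3) by (auto simp: bijections_def dest: bij_betwE)
  have split: "card A = card A1 + card A2" if "finite A" "A = A1 \<union> A2" "A1 \<inter> A2 = {}"
    for A A1 A2 :: "('a \<Rightarrow> 'b) set"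
    using that by (simp add: card_Un_disjoint)
  have N: "card ?B = card ?U + card ?V" and U: "card ?U = card ?GU + card ?BU"
    and bad: "card ?bad = card ?BU + card ?BV"
    by (rule split; use finite in_Y in auto)+
  have double_count: "k * card ?U = (m - k) * card ?V"
    using switching_double_count[OF assms(1-3) \<open>S \<subseteq> Y\<close>] card_Y_S by (simp add: k_def S_def)
  have good_bound: "(k - 1) * card ?GU \<le> (m - k) * card ?BV"
    using good_switching_bound[OF assms(1-3), of L] card_Y_S by (simp add: k_def S_def)
  have "(k - 1) * (m - k) * card ?B \<le> m * (m - 1) * (card ?BU + card ?BV)"
    by (rule switching_counts_bound[OF N U double_count good_bound]) (use False k_le in auto)
  then show ?thesis unfolding bad m_def .
qed simp

lemma deficit_bound:
  fixes k m :: nat and p q :: real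
  assumes "(1 - p) * m \<le> k" "1 < (1 - p) * m" "k \<le> m" "0 \<le> q"
    and "real ((k - 1) * (m - k)) \<le> q * real (m * (m - 1))"
  shows "(1 - 2 * q / (1 - p)) * m \<le> k"
proof -
  have "0 < (1 - p) * m" using assms(2) by linarith
  then have "1 - p > 0" "m > 0" by (simp_all add: zero_less_mult_iff)
  have "2 \<le> k" using assms(1,2) by linarith
  then have "(1 - p) * m / 2 \<le> real k - 1" using assms(1) by linarith
  then have "(m - real k) * ((1 - p) * m / 2) \<le> (m - real k) * (real k - 1)"
    using assms(3) by (intro mult_left_mono) auto
  also have "\<dots> = (real k - 1) * (m - real k)" by (rule mult.commute)
  also have "\<dots> \<le> q * m * (m - 1)"
    using assms(3,5) \<open>2 \<le> k\<close> by (simp add: of_nat_diff mult.assoc)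
  also have "\<dots> \<le> q * m * m"
    using assms(4) by (simp add: mult_left_mono)
  finally have "(m - real k) * (1 - p) * m \<le> 2 * q * m * m"
    by (simp add: field_simps)
  then have "(m - real k) * (1 - p) \<le> 2 * q * m"
    by (rule mult_right_le_imp_le) (use \<open>m > 0\<close> in simp)
  then have "m - real k \<le> 2 * q / (1 - p) * m"
    using \<open>1 - p > 0\<close> by (simp add: field_simps)
  then show ?thesis by (simp add: algebra_simps)
qed

lemma strong_row_improves:
  assumes "finite X" "finite Y" "card X = card Y" "q_good L q X Y"
    and "strong_line L p X Y (Row i)" "1 < (1 - p) * card Y"
  shows "strong_line L (2 * q / (1 - p)) X Y (Row i)"
proof -
  define k where "k = card {j \<in> Y. (i, j) \<in> L}"
  define m where "m = card Y"
  define N where "N = card (bijections X Y)"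
  define bad where "bad = card {\<sigma> \<in> bijections X Y. large_count L X \<sigma> \<noteq> 1}"
  have i: "i \<in> X" and strong: "(1 - p) * m \<le> k"
    using assms(5) by (simp_all add: strong_line_def k_def m_def)
  have "k \<le> m" unfolding k_def m_def using assms(2) by (simp add: card_mono)
  have "N > 0"
    using bijections_nonempty[OF assms(1-3)] finite_bijections[OF assms(1,2)] by (simp add: N_def card_gt_0_iff)
  have bad_le: "real bad \<le> q * N"
    using card_bad_bijections_le[OF assms(4,1,2)] by (simp add: bad_def N_def)
  then have "0 \<le> q * N" by (rule order.trans[rotated]) simp
  then have "0 \<le> q" using \<open>N > 0\<close> by (simp add: zero_le_mult_iff)
  have "real ((k - 1) * (m - k)) * N \<le> real (m * (m - 1)) * bad"
    using card_bad_bijections_lower_bound[OF assms(1,2) i, of L]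
    unfolding k_def m_def N_def bad_def of_nat_mult[symmetric] of_nat_le_iff by simp
  also have "\<dots> \<le> real (m * (m - 1)) * (q * N)"
    using bad_le by (intro mult_left_mono) auto
  finally have "real ((k - 1) * (m - k)) \<le> q * real (m * (m - 1))"
    using \<open>N > 0\<close> by (simp add: mult.commute mult.left_commute)
  with strong \<open>k \<le> m\<close> \<open>0 \<le> q\<close> assms(6) have "(1 - 2 * q / (1 - p)) * m \<le> k"
    by (intro deficit_bound) (simp_all add: m_def)
  then show ?thesis using i by (simp add: strong_line_def k_def m_def)
qed

lemma strong_line_improves:
  assumes "finite X" "finite Y" "card X = card Y" "q_good L q X Y"
    and "strong_line L p X Y l" "1 < (1 - p) * card X"
  shows "strong_line L (2 * q / (1 - p)) X Y l"
proof (cases l)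
  case (Row i)
  have "1 < (1 - p) * card Y" using assms(3,6) by simp
  with assms(5) show ?thesis
    unfolding Row by (intro strong_row_improves[OF assms(1-4)])
next
  case (Col j)
  have "strong_line (prod.swap ` L) p Y X (Row j)"
    using assms(5) unfolding Col strong_Col_iff_strong_Row_transpose .
  then have "strong_line (prod.swap ` L) (2 * q / (1 - p)) Y X (Row j)"
    using strong_row_improves[OF assms(2,1) assms(3)[symmetric] q_good_transpose[OF assms(4)]] assms(6)
    by blast
  then show ?thesis unfolding Col strong_Col_iff_strong_Row_transpose .
qed

theorem lemma2p13:
  fixes n :: nat and L :: "(nat \<times> nat) set" and X Y :: "nat set"
    and p q :: real and l :: line
  assumes "L \<subseteq> {..<n} \<times> {..<n}"
    and "restriction n X Y"
    and "q_good L q X Y"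
    and "strong_line L p X Y l"
    and "0 \<le> p" and "p < 1"
    and "card X \<ge> 6"
    and "(1 - p) * real (card X) > 1"
    and "2 * (2 * q / (1 - p)) * real (card X) > 1"
    and "2 * q / (1 - p) \<le> 1 / 2"
  shows "strong_line L (q + 3 * (2 * q / (1 - p))) X Y l"
proof -
  have "finite X" "finite Y" "card X = card Y"
    using assms(2) finite_subset unfolding restriction_def by auto
  then have strong: "strong_line L (2 * q / (1 - p)) X Y l"
    using assms(3,4,8) by (rule strong_line_improves)
  have "0 < 2 * q / (1 - p)"
    using assms(9) mult_nonpos_nonneg[of "2 * q / (1 - p)" "real (card X)"] by linarith
  moreover from this have "0 \<le> q" using assms(6) by (simp add: zero_less_divide_iff)
  ultimately have "2 * q / (1 - p) \<le> q + 3 * (2 * q / (1 - p))" by linarith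
  with strong show ?thesis by (rule strong_line_mono[rotated])
qed

end
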